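(* Let $X$ be a real Banach space, $\alpha$ an ordinal, $\varepsilon>0$, $f\in B_{X^*}$, and $M\subset X^*$ such that (i) $\mathrm{dist}(f,M)\ge\varepsilon$, and (ii) for every $\beta<\alpha$ and every weak$^*$-slice $S$ of $d_\varepsilon^\beta(B_{X^*})$ with $f\in S$, one has $S\cap M\neq\emptyset$. Then $f\in d_\varepsilon^\alpha(B_{X^*})$.
   Context: For $x\in X,t\in\mathbb R$, $H(x,t)=\{x^*\in X^*: x^*(x)>t\}$; a weak$^*$-slice of a weak$^*$-compact $K\subset X^*$ is a nonempty set $H(x,t)\cap K$; $d_\varepsilon K$ is $K$ minus the union of all weak$^*$-slices of $K$ of norm diameter $<\varepsilon$; $d_\varepsilon^0K=K$, $d_\varepsilon^{\beta+1}K=d_\varepsilon(d_\varepsilon^\beta K)$, $d_\varepsilon^\beta K=\bigcap_{\mu<\beta}d_\varepsilon^\mu K$ for limit $\beta$. A set $M$ satisfying (i),(ii) is called an $\varepsilon$-$\alpha$-obstacle for $f$. *)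

theory Defs
  imports "HOL-Analysis.Analysis"
begin

text \<open>Dual space X* is represented by bounded linear functionals \<open>'a \<Rightarrow>\<^sub>L real\<close>
  with the operator norm.  \<open>H(x,t) = {x*. x* x > t}\<close>.\<close>

definition wstar_halfspace :: "'a::real_normed_vector \<Rightarrow> real \<Rightarrow> ('a \<Rightarrow>\<^sub>L real) set" where
  "wstar_halfspace x t = {g. blinfun_apply g x > t}"

definition is_wstar_slice :: "('a::real_normed_vector \<Rightarrow>\<^sub>L real) set \<Rightarrow> ('a \<Rightarrow>\<^sub>L real) set \<Rightarrow> bool" where
  "is_wstar_slice K S \<longleftrightarrow> (\<exists>x t. S = wstar_halfspace x t \<inter> K) \<and> S \<noteq> {}"

definition szlenk_d :: "real \<Rightarrow> ('a::real_normed_vector \<Rightarrow>\<^sub>L real) set \<Rightarrow> ('a \<Rightarrow>\<^sub>L real) set" where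
  "szlenk_d \<epsilon> K = K - \<Union>{S. is_wstar_slice K S \<and> diameter S < \<epsilon>}"

text \<open>Transfinite iterates, indexed by elements of an arbitrary well-order type 'o
  (every ordinal is represented as an element of some well-ordered type):
  least element \<mapsto> K, successor \<mapsto> d of the predecessor, limit \<mapsto> intersection.\<close>
definition szlenk_iter :: "real \<Rightarrow> ('a::real_normed_vector \<Rightarrow>\<^sub>L real) set \<Rightarrow> 'o::wellorder \<Rightarrow> ('a \<Rightarrow>\<^sub>L real) set" where
  "szlenk_iter \<epsilon> K = wfrec {(\<mu>, \<beta>). \<mu> < \<beta>}
     (\<lambda>r \<beta>. if (\<forall>\<mu>. \<not> \<mu> < \<beta>) then K
            else if (\<exists>\<mu><\<beta>. \<forall>\<nu><\<beta>. \<nu> \<le> \<mu>)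
              then szlenk_d \<epsilon> (r (THE \<mu>. \<mu> < \<beta> \<and> (\<forall>\<nu><\<beta>. \<nu> \<le> \<mu>)))
            else (\<Inter>\<mu>\<in>{\<mu>. \<mu> < \<beta>}. r \<mu>))"

end

theory Submission
  imports Defs
begin

(* A point f of a bounded weak*-compact set K survives one Szlenk
   derivation d_eps as soon as every weak*-slice of K containing f also contains a
   point of M at distance >= eps from f: such a slice then has diameter >= eps, so
   it is not among the slices removed by d_eps.  The theorem follows by transfinite
   induction on beta <= alpha: at the least index the iterate is the unit ball,
   which contains f; at a successor beta = mu + 1 the one-step lemma applies to
   K = d^mu(B), which is bounded since all iterates lie in the unit ball, and
   whose slices through f meet M by hypothesis (ii) because mu < alpha; at a limit
   index f lies in every earlier iterate and hence in their intersection. *)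

lemma wf_less_wellorder: "wf {(\<mu>, \<beta>). (\<mu>::'o::wellorder) < \<beta>}"
  using wf by simp

lemma szlenk_iter_least:
  assumes "\<forall>\<mu>. \<not> \<mu> < (\<beta>::'o::wellorder)"
  shows "szlenk_iter \<epsilon> K \<beta> = K"
  unfolding szlenk_iter_def using assms by (subst wfrec[OF wf_less_wellorder]) simp

lemma szlenk_iter_succ:
  assumes "\<mu> < (\<beta>::'o::wellorder)" and "\<forall>\<nu><\<beta>. \<nu> \<le> \<mu>"
  shows "szlenk_iter \<epsilon> K \<beta> = szlenk_d \<epsilon> (szlenk_iter \<epsilon> K \<mu>)"
proof -
  have pred: "(THE \<mu>. \<mu> < \<beta> \<and> (\<forall>\<nu><\<beta>. \<nu> \<le> \<mu>)) = \<mu>"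
    using assms by (intro the_equality) (auto intro: order.antisym)
  show ?thesis
    unfolding szlenk_iter_def using assms
    by (subst wfrec[OF wf_less_wellorder]) (auto simp: pred cut_apply)
qed

lemma szlenk_iter_limit:
  assumes "\<mu>0 < (\<beta>::'o::wellorder)" and "\<not> (\<exists>\<mu><\<beta>. \<forall>\<nu><\<beta>. \<nu> \<le> \<mu>)"
  shows "szlenk_iter \<epsilon> K \<beta> = (\<Inter>\<mu>\<in>{\<mu>. \<mu> < \<beta>}. szlenk_iter \<epsilon> K \<mu>)"
  unfolding szlenk_iter_def using assms
  by (subst wfrec[OF wf_less_wellorder]) (auto simp: cut_apply)

lemma wellorder_index_cases:
  fixes \<beta> :: "'o::wellorder"
  obtains (least) "\<forall>\<mu>. \<not> \<mu> < \<beta>"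
    | (succ) \<mu> where "\<mu> < \<beta>" "\<forall>\<nu><\<beta>. \<nu> \<le> \<mu>"
    | (limit) \<mu>0 where "\<mu>0 < \<beta>" "\<not> (\<exists>\<mu><\<beta>. \<forall>\<nu><\<beta>. \<nu> \<le> \<mu>)"
  by blast

lemma szlenk_iter_subset: "szlenk_iter \<epsilon> K (\<beta>::'o::wellorder) \<subseteq> K"
proof (induction \<beta> rule: less_induct)
  case (less \<beta>)
  show ?case
  proof (cases \<beta> rule: wellorder_index_cases)
    case least
    then show ?thesis by (simp add: szlenk_iter_least)
  next
    case (succ \<mu>)
    then show ?thesis using less[of \<mu>] by (auto simp: szlenk_iter_succ szlenk_d_def)
  next
    case (limit \<mu>0)
    then show ?thesis using less[of \<mu>0] by (auto simp: szlenk_iter_limit)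
  qed
qed

text \<open>One derivation step: a point all of whose slices reach M, which stays at distance
  at least eps from it, lies in no slice of diameter below eps and so survives.\<close>

lemma szlenk_d_keeps_obstructed_point:
  assumes bounded: "bounded K" and "f \<in> K"
    and far: "\<forall>g\<in>M. \<epsilon> \<le> dist f g"
    and obstructed: "\<forall>S. is_wstar_slice K S \<and> f \<in> S \<longrightarrow> S \<inter> M \<noteq> {}"
  shows "f \<in> szlenk_d \<epsilon> K"
proof -
  have "\<epsilon> \<le> diameter S" if slice: "is_wstar_slice K S" and "f \<in> S" for S
  proof -
    obtain g where "g \<in> S" "g \<in> M"
      using obstructed slice \<open>f \<in> S\<close> by blast
    have "S \<subseteq> K"
      using slice unfolding is_wstar_slice_def by blast
    then have "dist f g \<le> diameter S"
      using bounded \<open>f \<in> S\<close> \<open>g \<in> S\<close> bounded_subset diameter_bounded_bound by blast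
    then show ?thesis
      using far \<open>g \<in> M\<close> by force
  qed
  then show ?thesis
    using \<open>f \<in> K\<close> unfolding szlenk_d_def by force
qed

theorem mainTheorem7:
  fixes f :: "'a::banach \<Rightarrow>\<^sub>L real"
    and M :: "('a \<Rightarrow>\<^sub>L real) set"
    and \<alpha> :: "'o::wellorder"
    and \<epsilon> :: real
  assumes "\<epsilon> > 0"
    and "f \<in> cball 0 1"
    and "\<forall>g\<in>M. \<epsilon> \<le> dist f g"
    and "\<forall>\<beta>. \<beta> < \<alpha> \<longrightarrow> (\<forall>S. is_wstar_slice (szlenk_iter \<epsilon> (cball 0 1) \<beta>) S \<and> f \<in> S
              \<longrightarrow> S \<inter> M \<noteq> {})"
  shows "f \<in> szlenk_iter \<epsilon> (cball 0 1) \<alpha>"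
proof -
  let ?d = "szlenk_iter \<epsilon> (cball 0 1)"
  have "\<beta> \<le> \<alpha> \<longrightarrow> f \<in> ?d \<beta>" for \<beta>
  proof (induction \<beta> rule: less_induct)
    case (less \<beta>)
    show ?case
    proof (cases \<beta> rule: wellorder_index_cases)
      case least
      then show ?thesis using assms(2) by (simp add: szlenk_iter_least)
    next
      case (succ \<mu>)
      have "bounded (?d \<mu>)"
        using szlenk_iter_subset bounded_cball bounded_subset by blast
      show ?thesis
      proof
        assume "\<beta> \<le> \<alpha>"
        with succ have "\<mu> < \<alpha>" by simp
        moreover from this have "f \<in> ?d \<mu>"
          using less[of \<mu>] succ by simp
        ultimately have "f \<in> szlenk_d \<epsilon> (?d \<mu>)"
          using \<open>bounded (?d \<mu>)\<close> assms(3,4) by (intro szlenk_d_keeps_obstructed_point) auto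
        then show "f \<in> ?d \<beta>"
          using succ by (simp add: szlenk_iter_succ)
      qed
    next
      case (limit \<mu>0)
      then show ?thesis using less by (auto simp: szlenk_iter_limit)
    qed
  qed
  then show ?thesis by simp
qed

end
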